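(* Let $X$ be a normed space, $1\le r<\infty$, $T>0$, and $a:[0,T]\to X$ continuously differentiable. Then $$\hat V^r(a(t))_{t\in[0,T]}\le 8\,\|a\|_{L^r([0,T];X)}^{1-1/r}\,\|a'\|_{L^r([0,T];X)}^{1/r}.$$
   Context: For a family $(a_t)_{t\in I}$ in a normed space, $\hat V^r(a_t)_{t\in I}=\sup_{t_0<t_1<\dots<t_J\in I}(\sum_{j=1}^J\|a_{t_j}-a_{t_{j-1}}\|^r)^{1/r}$, supremum over all $J$ and all increasing finite sequences in $I$. *)

theory Defs
  imports "HOL-Analysis.Analysis"
begin

text \<open>Valued in ereal since it may be infinite.\<close>
definition rvar :: "real \<Rightarrow> (real \<Rightarrow> 'a::real_normed_vector) \<Rightarrow> real set \<Rightarrow> ereal" where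
  "rvar r a I = (SUP p \<in> {(J, t). (\<forall>j\<le>J. t j \<in> I) \<and> (\<forall>j<J. t j < t (Suc j))}.
      ereal ((\<Sum>j\<in>{1..fst p}. norm (a (snd p j) - a (snd p (j - 1))) powr r) powr (1 / r)))"

definition Lr_norm :: "real \<Rightarrow> real \<Rightarrow> (real \<Rightarrow> 'a::real_normed_vector) \<Rightarrow> real" where
  "Lr_norm r T f = (integral {0..T} (\<lambda>t. norm (f t) powr r)) powr (1 / r)"

end

theory Submission
  imports Defs
begin

text \<open>On an interval [s, t] let M be the maximum of |a|, so that |a t - a s| <= 2M. Some
  subinterval carries a change of a of at least |a t - a s|/4 while |a| >= M/2 on it; bounding
  that change by the integral of |a'| gives |a t - a s|^r <= 4^r \<integral>_s^t |a|^(r-1) |a'|.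
  Summing over a partition and applying Hoelder's inequality with exponents r/(r-1) and r
  yields the bound with constant 4.\<close>

text \<open>x^(r-1), with r = 1 treated separately because \<open>0 powr 0 = 0\<close>.\<close>
definition powr_pred :: "real \<Rightarrow> real \<Rightarrow> real" where
  "powr_pred x r = (if r = 1 then 1 else x powr (r - 1))"

lemma powr_pred_nonneg [simp]: "0 \<le> powr_pred x r"
  by (simp add: powr_pred_def)

lemma powr_pred_mono:
  assumes "1 \<le> r" "0 \<le> x" "x \<le> y"
  shows "powr_pred x r \<le> powr_pred y r"
  using assms by (auto simp: powr_pred_def intro: powr_mono2)

lemma powr_pred_mult_self:
  assumes "0 \<le> x"
  shows "powr_pred x r * x = x powr r"
  using assms powr_add[of x "r - 1" 1] by (auto simp: powr_pred_def)

lemma continuous_on_powr_pred: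
  assumes "1 \<le> r" "continuous_on S f" "\<And>x. x \<in> S \<Longrightarrow> 0 \<le> f x"
  shows "continuous_on S (\<lambda>x. powr_pred (f x) r)"
proof (cases "r = 1")
  case False
  then show ?thesis
    using assms by (auto simp: powr_pred_def intro!: continuous_on_powr')
qed (simp add: powr_pred_def)

text \<open>Young's inequality applied to x^r/P and y^r/Q; integrating it gives Hoelder's inequality.\<close>
lemma young_powr_pred:
  assumes "1 \<le> r" "0 \<le> x" "0 \<le> y" "0 < P" "0 < Q"
  shows "powr_pred x r * y
    \<le> P powr (1 - 1/r) * Q powr (1/r) * ((1 - 1/r) * (x powr r / P) + 1/r * (y powr r / Q))"
proof (cases "r = 1 \<or> x = 0 \<or> y = 0")
  case True
  then show ?thesis
    using assms by (auto simp: powr_pred_def intro!: mult_nonneg_nonneg add_nonneg_nonneg)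
next
  case False
  then have "1 < r" "0 < x" "0 < y" using assms by auto
  have "(x powr r / P) powr (1 - 1/r) * (y powr r / Q) powr (1/r)
      \<le> (1 - 1/r) * (x powr r / P) + 1/r * (y powr r / Q)"
    by (rule Youngs_inequality_0) (use \<open>1 < r\<close> \<open>0 < x\<close> \<open>0 < y\<close> assms in auto)
  moreover have "(x powr r / P) powr (1 - 1/r) * (y powr r / Q) powr (1/r)
      = powr_pred x r * y / (P powr (1 - 1/r) * Q powr (1/r))"
  proof -
    have "r * (1 - 1/r) = r - 1" using \<open>1 < r\<close> by (simp add: field_simps)
    then show ?thesis
      using \<open>1 < r\<close> \<open>0 < x\<close> \<open>0 < y\<close> assms
      by (simp add: powr_pred_def powr_divide powr_powr)
  qed
  ultimately show ?thesis
    using assms by (simp add: divide_le_eq mult.commute)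
qed

lemma integral_powr_pred_mult_le:
  fixes u v :: "real \<Rightarrow> real"
  assumes "1 \<le> r" "c < d"
    and u: "continuous_on {c..d} u" "\<And>x. x \<in> {c..d} \<Longrightarrow> 0 \<le> u x"
    and v: "continuous_on {c..d} v" "\<And>x. x \<in> {c..d} \<Longrightarrow> 0 \<le> v x"
    and P_pos: "0 < integral {c..d} (\<lambda>x. u x powr r)"
  shows "integral {c..d} (\<lambda>x. powr_pred (u x) r * v x)
    \<le> integral {c..d} (\<lambda>x. u x powr r) powr (1 - 1/r) * integral {c..d} (\<lambda>x. v x powr r) powr (1/r)"
proof -
  define P where "P = integral {c..d} (\<lambda>x. u x powr r)"
  define Q where "Q = integral {c..d} (\<lambda>x. v x powr r)"
  have cont_ur: "continuous_on {c..d} (\<lambda>x. u x powr r)"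
    and cont_vr: "continuous_on {c..d} (\<lambda>x. v x powr r)"
    using assms by (auto intro!: continuous_on_powr')
  have cont_uv: "continuous_on {c..d} (\<lambda>x. powr_pred (u x) r * v x)"
    using assms by (intro continuous_intros continuous_on_powr_pred) auto
  have "0 \<le> Q"
    unfolding Q_def by (rule integral_nonneg[OF integrable_continuous_real[OF cont_vr]]) (simp add: v)
  then consider "Q = 0" | "0 < Q" by linarith
  then show ?thesis
  proof cases
    case 1
    then have "\<forall>x\<in>{c..d}. v x powr r = 0"
      using integral_eq_0_iff[OF cont_vr \<open>c < d\<close>] by (simp add: Q_def)
    then have "integral {c..d} (\<lambda>x. powr_pred (u x) r * v x) = integral {c..d} (\<lambda>x. 0)"
      by (intro integral_cong) simp
    then show ?thesis by simp
  next
    case 2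
    have "0 < P" using P_pos by (simp add: P_def)
    define K where "K = P powr (1 - 1/r) * Q powr (1/r)"
    define A where "A = K * (1 - 1/r) / P"
    define B where "B = K * (1/r) / Q"
    have "integral {c..d} (\<lambda>x. powr_pred (u x) r * v x)
        \<le> integral {c..d} (\<lambda>x. A * u x powr r + B * v x powr r)"
    proof (rule integral_le)
      fix x assume "x \<in> {c..d}"
      then show "powr_pred (u x) r * v x \<le> A * u x powr r + B * v x powr r"
        using young_powr_pred[OF \<open>1 \<le> r\<close> u(2) v(2) \<open>0 < P\<close> \<open>0 < Q\<close>]
        by (simp add: A_def B_def K_def algebra_simps)
    qed (intro integrable_continuous_real continuous_intros cont_uv cont_ur cont_vr)+
    also have "\<dots> = A * P + B * Q"
      using integrable_continuous_real[OF continuous_on_mult_left[OF cont_ur, of A]]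
        integrable_continuous_real[OF continuous_on_mult_left[OF cont_vr, of B]]
      by (simp add: integral_add P_def Q_def)
    also have "\<dots> = K"
      using \<open>0 < P\<close> \<open>0 < Q\<close> \<open>1 \<le> r\<close> by (simp add: A_def B_def field_simps)
    finally show ?thesis by (simp add: K_def P_def Q_def)
  qed
qed

lemma has_vector_derivative_imp_continuous_on:
  assumes "\<And>x. x \<in> S \<Longrightarrow> (f has_vector_derivative f' x) (at x within S)"
  shows "continuous_on S f"
  using assms has_vector_derivative_continuous continuous_on_eq_continuous_within by blast

lemma norm_diff_le_integral_norm_derivative:
  fixes f f' :: "real \<Rightarrow> 'a::real_normed_vector"
  assumes "s \<le> t"
    and f': "\<And>x. x \<in> {s..t} \<Longrightarrow> (f has_vector_derivative f' x) (at x within {s..t})"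
    and "continuous_on {s..t} f'"
  shows "norm (f t - f s) \<le> integral {s..t} (\<lambda>x. norm (f' x))"
proof (cases "s = t")
  case False
  then have "s < t" using \<open>s \<le> t\<close> by simp
  have cont: "continuous_on {s..t} (\<lambda>x. norm (f' x))"
    using assms(3) by (rule continuous_on_norm)
  have "norm (f t - f s) \<le> integral {s..t} (\<lambda>x. norm (f' x)) - integral {s..s} (\<lambda>x. norm (f' x))"
  proof (rule differentiable_bound_general[OF \<open>s < t\<close> has_vector_derivative_imp_continuous_on[OF f']
        indefinite_integral_continuous_1[OF integrable_continuous_real[OF cont]]])
    fix x assume x: "s < x" "x < t"
    then show "(f has_vector_derivative f' x) (at x)"
      using f'[of x] at_within_Icc_at[of s x t] by auto
    show "((\<lambda>u. integral {s..u} (\<lambda>x. norm (f' x))) has_vector_derivative norm (f' x)) (at x)"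
      using integral_has_vector_derivative[OF cont, of x] at_within_Icc_at[of s x t] x by auto
    show "norm (f' x) \<le> norm (f' x)" by simp
  qed
  then show ?thesis by simp
qed simp

lemma powr_pred_mult_norm_diff_le_integral:
  fixes f f' :: "real \<Rightarrow> 'a::real_normed_vector"
  assumes "1 \<le> r" "s \<le> t"
    and f': "\<And>x. x \<in> {s..t} \<Longrightarrow> (f has_vector_derivative f' x) (at x within {s..t})"
    and cont': "continuous_on {s..t} f'"
    and "0 \<le> c" and lower: "\<And>x. x \<in> {s<..<t} \<Longrightarrow> c \<le> norm (f x)"
  shows "powr_pred c r * norm (f t - f s) \<le> integral {s..t} (\<lambda>x. powr_pred (norm (f x)) r * norm (f' x))"
proof -
  have "powr_pred c r * norm (f t - f s) \<le> powr_pred c r * integral {s..t} (\<lambda>x. norm (f' x))"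
    using norm_diff_le_integral_norm_derivative[OF \<open>s \<le> t\<close> f' cont'] by (simp add: mult_left_mono)
  also have "\<dots> = integral {s<..<t} (\<lambda>x. powr_pred c r * norm (f' x))"
    by (simp add: integral_open_interval_real)
  also have "\<dots> \<le> integral {s<..<t} (\<lambda>x. powr_pred (norm (f x)) r * norm (f' x))"
  proof (rule integral_le)
    show "(\<lambda>x. powr_pred c r * norm (f' x)) integrable_on {s<..<t}"
      unfolding integrable_on_open_interval_real
      by (intro integrable_continuous_real continuous_intros cont')
    show "(\<lambda>x. powr_pred (norm (f x)) r * norm (f' x)) integrable_on {s<..<t}"
      unfolding integrable_on_open_interval_real
      using \<open>1 \<le> r\<close> has_vector_derivative_imp_continuous_on[OF f']
      by (intro integrable_continuous_real continuous_intros continuous_on_powr_pred cont') auto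
  qed (use powr_pred_mono[OF \<open>1 \<le> r\<close> \<open>0 \<le> c\<close> lower] in \<open>auto intro: mult_right_mono\<close>)
  also have "\<dots> = integral {s..t} (\<lambda>x. powr_pred (norm (f x)) r * norm (f' x))"
    by (rule integral_open_interval_real[symmetric])
  finally show ?thesis .
qed

lemma closest_sublevel_point:
  fixes g :: "real \<Rightarrow> real"
  assumes "continuous_on {s..t} g" "\<rho> \<in> {s..t}" "g \<rho> \<le> m" "\<tau> \<in> {s..t}"
  obtains \<sigma> where "\<sigma> \<in> {s..t}" "g \<sigma> \<le> m" "\<And>x. x \<in> open_segment \<sigma> \<tau> \<Longrightarrow> m < g x"
proof -
  define S where "S = {s..t} \<inter> g -` {..m}"
  have "closed S"
    unfolding S_def using assms(1) by (rule continuous_closed_preimage) auto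
  moreover have "S \<noteq> {}" using assms(2,3) by (auto simp: S_def)
  ultimately obtain \<sigma> where "\<sigma> \<in> S" and closest: "\<And>y. y \<in> S \<Longrightarrow> dist \<tau> \<sigma> \<le> dist \<tau> y"
    using distance_attains_inf[of S \<tau>] by blast
  show thesis
  proof
    show "\<sigma> \<in> {s..t}" "g \<sigma> \<le> m" using \<open>\<sigma> \<in> S\<close> by (auto simp: S_def)
    fix x assume x: "x \<in> open_segment \<sigma> \<tau>"
    then have "x \<in> {s..t}" "dist \<tau> x < dist \<tau> \<sigma>"
      using \<open>\<sigma> \<in> {s..t}\<close> assms(4) by (auto simp: open_segment_eq_real_ivl dist_real_def split: if_splits)
    then show "m < g x" using closest[of x] by (force simp: S_def)
  qed
qed

text \<open>With M the maximum of |f|: either |f| >= M/2 on all of [s, t], or one takes the stretch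
  between a maximiser and the nearest point where |f| <= M/2.\<close>
lemma exists_subinterval_norm_lower_bound:
  fixes f :: "real \<Rightarrow> 'a::real_normed_vector"
  assumes "s \<le> t" "continuous_on {s..t} f"
  obtains p q c where "s \<le> p" "p \<le> q" "q \<le> t" "0 \<le> c"
    "norm (f t - f s) \<le> 4 * c" "norm (f t - f s) \<le> 4 * norm (f q - f p)"
    "\<And>x. x \<in> {p<..<q} \<Longrightarrow> c \<le> norm (f x)"
proof -
  have cont: "continuous_on {s..t} (\<lambda>x. norm (f x))"
    using assms(2) by (rule continuous_on_norm)
  obtain \<tau> where \<tau>: "\<tau> \<in> {s..t}" "\<And>y. y \<in> {s..t} \<Longrightarrow> norm (f y) \<le> norm (f \<tau>)"
    using continuous_attains_sup[OF compact_Icc _ cont] assms(1) by auto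
  define M where "M = norm (f \<tau>)"
  have "norm (f t - f s) \<le> norm (f t) + norm (f s)" by (rule norm_triangle_ineq4)
  also have "\<dots> \<le> 2 * M" using \<tau>(2)[of s] \<tau>(2)[of t] assms(1) by (simp add: M_def)
  finally have diff_le: "norm (f t - f s) \<le> 4 * (M/2)" by simp
  show thesis
  proof (cases "\<forall>x\<in>{s..t}. M/2 \<le> norm (f x)")
    case True
    then show thesis using that[of s t "M/2"] diff_le assms(1) by (auto simp: M_def)
  next
    case False
    then obtain \<rho> where "\<rho> \<in> {s..t}" "norm (f \<rho>) \<le> M/2" by force
    then obtain \<sigma> where \<sigma>: "\<sigma> \<in> {s..t}" "norm (f \<sigma>) \<le> M/2"
      and above: "\<And>x. x \<in> open_segment \<sigma> \<tau> \<Longrightarrow> M/2 < norm (f x)"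
      using closest_sublevel_point[OF cont _ _ \<tau>(1)] by blast
    have "M/2 \<le> norm (f \<tau>) - norm (f \<sigma>)" using \<sigma>(2) by (simp add: M_def)
    also have "\<dots> \<le> norm (f \<tau> - f \<sigma>)" by (rule norm_triangle_ineq2)
    finally have jump: "M/2 \<le> norm (f \<tau> - f \<sigma>)" .
    show thesis
    proof (rule that[of "min \<sigma> \<tau>" "max \<sigma> \<tau>" "M/2"])
      show "norm (f t - f s) \<le> 4 * norm (f (max \<sigma> \<tau>) - f (min \<sigma> \<tau>))"
        using diff_le jump by (cases "\<sigma> \<le> \<tau>") (auto simp: norm_minus_commute max_def min_def)
      fix x assume "x \<in> {min \<sigma> \<tau><..<max \<sigma> \<tau>}"
      then have "x \<in> open_segment \<sigma> \<tau>" by (auto simp: open_segment_eq_real_ivl)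
      then show "M/2 \<le> norm (f x)" using above by (simp add: less_imp_le)
    qed (use \<sigma>(1) \<tau>(1) diff_le in \<open>auto simp: M_def\<close>)
  qed
qed

lemma continuous_on_powr_pred_norm_mult_norm:
  fixes f g :: "real \<Rightarrow> 'a::real_normed_vector"
  assumes "1 \<le> r" "continuous_on S f" "continuous_on S g"
  shows "continuous_on S (\<lambda>x. powr_pred (norm (f x)) r * norm (g x))"
  using assms by (intro continuous_intros continuous_on_powr_pred) auto

lemma norm_diff_powr_le_integral:
  fixes f f' :: "real \<Rightarrow> 'a::real_normed_vector"
  assumes "1 \<le> r" "s \<le> t"
    and f': "\<And>x. x \<in> {s..t} \<Longrightarrow> (f has_vector_derivative f' x) (at x within {s..t})"
    and cont': "continuous_on {s..t} f'"
  shows "norm (f t - f s) powr r \<le> 4 powr r * integral {s..t} (\<lambda>x. powr_pred (norm (f x)) r * norm (f' x))"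
proof -
  let ?w = "\<lambda>x. powr_pred (norm (f x)) r * norm (f' x)"
  have cont_f: "continuous_on {s..t} f"
    using f' by (rule has_vector_derivative_imp_continuous_on)
  obtain p q c where pq: "s \<le> p" "p \<le> q" "q \<le> t" and "0 \<le> c"
    and bounds: "norm (f t - f s) \<le> 4 * c" "norm (f t - f s) \<le> 4 * norm (f q - f p)"
    and lower: "\<And>x. x \<in> {p<..<q} \<Longrightarrow> c \<le> norm (f x)"
    using exists_subinterval_norm_lower_bound[OF \<open>s \<le> t\<close> cont_f] by blast
  define d where "d = norm (f t - f s) / 4"
  have "d powr r = powr_pred d r * d"
    unfolding d_def by (rule powr_pred_mult_self[symmetric]) simp
  also have "\<dots> \<le> powr_pred c r * norm (f q - f p)"
    using bounds \<open>1 \<le> r\<close> by (intro mult_mono powr_pred_mono) (auto simp: d_def)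
  also have "\<dots> \<le> integral {p..q} ?w"
  proof (rule powr_pred_mult_norm_diff_le_integral[OF \<open>1 \<le> r\<close> \<open>p \<le> q\<close> _ _ \<open>0 \<le> c\<close> lower])
    show "(f has_vector_derivative f' x) (at x within {p..q})" if "x \<in> {p..q}" for x
      using f'[of x] pq that by (auto intro: has_vector_derivative_within_subset)
    show "continuous_on {p..q} f'" using cont' pq by (auto intro: continuous_on_subset)
  qed
  also have "\<dots> \<le> integral {s..t} ?w"
    using pq continuous_on_powr_pred_norm_mult_norm[OF \<open>1 \<le> r\<close> cont_f cont']
    by (intro integral_subset_le integrable_continuous_real) (auto intro: continuous_on_subset)
  finally have "d powr r \<le> integral {s..t} ?w" .
  moreover have "norm (f t - f s) powr r = 4 powr r * d powr r"
    by (simp add: d_def flip: powr_mult)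
  ultimately show ?thesis by simp
qed

lemma sum_norm_diff_powr_le_integral:
  fixes f f' :: "real \<Rightarrow> 'a::real_normed_vector" and t :: "nat \<Rightarrow> real"
  assumes "1 \<le> r"
    and f': "\<And>x. x \<in> {c..d} \<Longrightarrow> (f has_vector_derivative f' x) (at x within {c..d})"
    and cont': "continuous_on {c..d} f'"
    and t: "\<forall>j\<le>J. t j \<in> {c..d}" "\<forall>j<J. t j < t (Suc j)"
  shows "(\<Sum>j\<in>{1..J}. norm (f (t j) - f (t (j - 1))) powr r)
    \<le> 4 powr r * integral {c..d} (\<lambda>x. powr_pred (norm (f x)) r * norm (f' x))"
proof -
  let ?w = "\<lambda>x. powr_pred (norm (f x)) r * norm (f' x)"
  have cont_w: "continuous_on {c..d} ?w"
    using assms(1) has_vector_derivative_imp_continuous_on[OF f'] cont'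
    by (rule continuous_on_powr_pred_norm_mult_norm)
  have int_w: "?w integrable_on {p..q}" if "c \<le> p" "q \<le> d" for p q
    using that by (intro integrable_continuous_real continuous_on_subset[OF cont_w]) auto
  have "t 0 \<le> t J \<and> (\<Sum>j\<in>{1..J}. norm (f (t j) - f (t (j - 1))) powr r) \<le> 4 powr r * integral {t 0..t J} ?w"
    using t
  proof (induction J)
    case (Suc J)
    then have IH: "t 0 \<le> t J" "(\<Sum>j\<in>{1..J}. norm (f (t j) - f (t (j - 1))) powr r) \<le> 4 powr r * integral {t 0..t J} ?w"
      by auto
    have "t 0 \<in> {c..d}" "t J \<in> {c..d}" "t (Suc J) \<in> {c..d}" "t J < t (Suc J)"
      using Suc.prems by auto
    then have last: "norm (f (t (Suc J)) - f (t J)) powr r \<le> 4 powr r * integral {t J..t (Suc J)} ?w"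
      using continuous_on_subset[OF cont']
      by (intro norm_diff_powr_le_integral \<open>1 \<le> r\<close>) (auto intro: has_vector_derivative_within_subset[OF f'])
    have "integral {t 0..t (Suc J)} ?w = integral {t 0..t J} ?w + integral {t J..t (Suc J)} ?w"
      using IH(1) \<open>t J < t (Suc J)\<close> \<open>t 0 \<in> {c..d}\<close> \<open>t (Suc J) \<in> {c..d}\<close>
      by (intro Henstock_Kurzweil_Integration.integral_combine[symmetric] int_w) auto
    then show ?case
      using IH last \<open>t J < t (Suc J)\<close> by (simp add: distrib_left)
  qed simp
  moreover have "integral {t 0..t J} ?w \<le> integral {c..d} ?w"
    using t(1) by (intro integral_subset_le int_w) auto
  ultimately show ?thesis by (smt (verit) mult_left_mono powr_ge_zero)
qed

lemma sum_norm_diff_powr_le_Lr_norms: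
  fixes a a' :: "real \<Rightarrow> 'a::real_normed_vector" and t :: "nat \<Rightarrow> real"
  assumes "1 \<le> r" "0 < T"
    and a': "\<And>x. x \<in> {0..T} \<Longrightarrow> (a has_vector_derivative a' x) (at x within {0..T})"
    and cont': "continuous_on {0..T} a'"
    and t: "\<forall>j\<le>J. t j \<in> {0..T}" "\<forall>j<J. t j < t (Suc j)"
  shows "(\<Sum>j\<in>{1..J}. norm (a (t j) - a (t (j - 1))) powr r) powr (1/r)
    \<le> 4 * Lr_norm r T a powr (1 - 1/r) * Lr_norm r T a' powr (1/r)"
proof -
  define S where "S = (\<Sum>j\<in>{1..J}. norm (a (t j) - a (t (j - 1))) powr r)"
  define P where "P = integral {0..T} (\<lambda>x. norm (a x) powr r)"
  define Q where "Q = integral {0..T} (\<lambda>x. norm (a' x) powr r)"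
  have cont: "continuous_on {0..T} a"
    using a' by (rule has_vector_derivative_imp_continuous_on)
  have cont_ar: "continuous_on {0..T} (\<lambda>x. norm (a x) powr r)"
    using \<open>1 \<le> r\<close> cont by (auto intro!: continuous_on_powr' continuous_on_norm)
  have "0 \<le> P"
    unfolding P_def by (rule integral_nonneg[OF integrable_continuous_real[OF cont_ar]]) simp
  have "S \<le> 4 powr r * (P powr (1 - 1/r) * Q powr (1/r))"
  proof (cases "P = 0")
    case True
    then have "\<forall>x\<in>{0..T}. norm (a x) powr r = 0"
      using integral_eq_0_iff[OF cont_ar \<open>0 < T\<close>] by (simp add: P_def)
    then have "S = 0" using t(1) by (auto simp: S_def intro!: sum.neutral)
    then show ?thesis by simp
  next
    case False
    have "S \<le> 4 powr r * integral {0..T} (\<lambda>x. powr_pred (norm (a x)) r * norm (a' x))"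
      unfolding S_def by (rule sum_norm_diff_powr_le_integral[OF \<open>1 \<le> r\<close> a' cont' t])
    also have "\<dots> \<le> 4 powr r * (P powr (1 - 1/r) * Q powr (1/r))"
      using False \<open>0 \<le> P\<close> unfolding P_def Q_def
      by (intro mult_left_mono integral_powr_pred_mult_le \<open>1 \<le> r\<close> \<open>0 < T\<close> continuous_on_norm cont cont') auto
    finally show ?thesis .
  qed
  then have "S powr (1/r) \<le> (4 powr r * (P powr (1 - 1/r) * Q powr (1/r))) powr (1/r)"
    using \<open>1 \<le> r\<close> by (intro powr_mono2) (auto simp: S_def intro: sum_nonneg)
  also have "\<dots> = 4 * Lr_norm r T a powr (1 - 1/r) * Lr_norm r T a' powr (1/r)"
    using \<open>1 \<le> r\<close> by (simp add: Lr_norm_def P_def[symmetric] Q_def[symmetric] powr_mult powr_powr mult.commute)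
  finally show ?thesis by (simp add: S_def)
qed

theorem lemmaB1:
  fixes a a' :: "real \<Rightarrow> 'a::real_normed_vector" and r T :: real
  assumes "1 \<le> r" and "T > 0"
    and "\<And>t. t \<in> {0..T} \<Longrightarrow> (a has_vector_derivative a' t) (at t within {0..T})"
    and "continuous_on {0..T} a'"
  shows "rvar r a {0..T} \<le> ereal (8 * Lr_norm r T a powr (1 - 1 / r) * Lr_norm r T a' powr (1 / r))"
  unfolding rvar_def
proof (rule SUP_least)
  fix p assume "p \<in> {(J, t). (\<forall>j\<le>J. t j \<in> {0..T}) \<and> (\<forall>j<J. t j < t (Suc j))}"
  then obtain J t where p: "p = (J, t)" and t: "\<forall>j\<le>J. t j \<in> {0..T}" "\<forall>j<J. t j < t (Suc j)"
    by blast
  have "(\<Sum>j\<in>{1..J}. norm (a (t j) - a (t (j - 1))) powr r) powr (1/r)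
      \<le> 4 * Lr_norm r T a powr (1 - 1/r) * Lr_norm r T a' powr (1/r)"
    by (rule sum_norm_diff_powr_le_Lr_norms[OF assms t])
  also have "\<dots> \<le> 8 * Lr_norm r T a powr (1 - 1/r) * Lr_norm r T a' powr (1/r)"
    by (intro mult_right_mono) auto
  finally show "ereal ((\<Sum>j\<in>{1..fst p}. norm (a (snd p j) - a (snd p (j - 1))) powr r) powr (1 / r))
      \<le> ereal (8 * Lr_norm r T a powr (1 - 1 / r) * Lr_norm r T a' powr (1 / r))"
    by (simp add: p)
qed

end
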